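(* Let $t\ge 2q_0+1$ be an integer. For every $s\in H(P_\infty)$ with $s\le t(q+2q_0+1)$ there exists $(a,b,c,d)\in\mathbb{Z}_{\ge0}^4$ with $aq+b(q+q_0)+c(q+2q_0)+d(q+2q_0+1)=s$ and $a+b+c+d\le t$.
   Context: $n\ge2$ is an integer, $q_0=2^n$, $q=2q_0^2$. $H(P_\infty)$ denotes the numerical semigroup generated by $q,\ q+q_0,\ q+2q_0,\ q+2q_0+1$ (this is the Weierstrass semigroup at the point at infinity of the normalization of the Suzuki curve $y^q-y=x^{q_0}(x^q-x)$). *)

theory Defs
  imports Main
begin

definition suz_q0 :: "nat \<Rightarrow> nat" where
  "suz_q0 n = 2 ^ n"

definition suz_q :: "nat \<Rightarrow> nat" where
  "suz_q n = 2 * (suz_q0 n)^2"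

definition suz_H :: "nat \<Rightarrow> nat set" where
  "suz_H n = {s. \<exists>a b c d :: nat.
      a * suz_q n + b * (suz_q n + suz_q0 n) + c * (suz_q n + 2 * suz_q0 n)
      + d * (suz_q n + 2 * suz_q0 n + 1) = s}"

end

theory Submission
  imports Defs
begin

text \<open>Write \<open>m = q\<^sub>0\<close>, so the generators are \<open>2m\<^sup>2, 2m\<^sup>2+m, 2m\<^sup>2+2m, 2m\<^sup>2+2m+1\<close>.
  A sum of exactly \<open>N\<close> generators is the same as a number \<open>N\<cdot>2m\<^sup>2 + m u + y\<close> with
  \<open>2y \<le> u \<le> 2N\<close>. If \<open>s\<close> has such a form with \<open>N\<close> larger than \<open>t\<close> while
  \<open>s \<le> t(2m\<^sup>2+2m+1)\<close>, then the excess \<open>s - (N-1)\<cdot>2m\<^sup>2\<close> lies between \<open>2m\<^sup>2\<close> and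
  \<open>(N-1)(2m+1)\<close>, and division by \<open>m\<close> rewrites it in the form required at level
  \<open>N-1\<close>. Descending until \<open>N \<le> t\<close> proves the theorem.\<close>

definition sum_of_generators :: "nat \<Rightarrow> nat \<Rightarrow> nat \<Rightarrow> bool" where
  "sum_of_generators m N s \<longleftrightarrow> (\<exists>a b c d.
     a * (2*m*m) + b * (2*m*m + m) + c * (2*m*m + 2*m) + d * (2*m*m + 2*m + 1) = s
     \<and> a + b + c + d = N)"

lemma sum_of_generators_iff:
  "sum_of_generators m N s \<longleftrightarrow>
     (\<exists>u y. 2*y \<le> u \<and> u \<le> 2*N \<and> s = N*(2*m*m) + m*u + y)"
proof
  assume "sum_of_generators m N s"
  then obtain a b c d where
    abcd: "a * (2*m*m) + b * (2*m*m + m) + c * (2*m*m + 2*m) + d * (2*m*m + 2*m + 1) = s"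
      and N: "a + b + c + d = N"
    unfolding sum_of_generators_def by blast
  have "s = N*(2*m*m) + m*(b + 2*c + 2*d) + d"
    using abcd N by (auto simp: algebra_simps)
  then show "\<exists>u y. 2*y \<le> u \<and> u \<le> 2*N \<and> s = N*(2*m*m) + m*u + y"
    using N by (intro exI[of _ "b + 2*c + 2*d"] exI[of _ d]) auto
next
  assume "\<exists>u y. 2*y \<le> u \<and> u \<le> 2*N \<and> s = N*(2*m*m) + m*u + y"
  then obtain u y where uy: "2*y \<le> u" "u \<le> 2*N" and s: "s = N*(2*m*m) + m*u + y"
    by blast
  define b where "b = (u - 2*y) mod 2"
  define c where "c = (u - 2*y) div 2"
  have u: "u = b + 2*c + 2*y" using uy(1) unfolding b_def c_def by presburger
  moreover have "b < 2" unfolding b_def by simp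
  ultimately have "b + c + y \<le> N" using uy(2) by linarith
  define a where "a = N - y - b - c"
  have N: "a + b + c + y = N" using \<open>b + c + y \<le> N\<close> unfolding a_def by simp
  have "a * (2*m*m) + b * (2*m*m + m) + c * (2*m*m + 2*m) + y * (2*m*m + 2*m + 1)
      = (a + b + c + y)*(2*m*m) + m*(b + 2*c + 2*y) + y"
    by (simp add: algebra_simps)
  also have "\<dots> = s" using s u N by simp
  finally show "sum_of_generators m N s"
    unfolding sum_of_generators_def using N by blast
qed

lemma excess_decomposition:
  fixes m K v :: nat
  assumes m: "m \<ge> 1" and lower: "m*(2*m) \<le> v" and upper: "v \<le> K*(2*m + 1)"
  shows "\<exists>u y. 2*y \<le> u \<and> u \<le> 2*K \<and> v = m*u + y"
proof (cases "v div m \<le> 2*K")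
  case True
  have "2*m \<le> v div m"
    using div_le_mono[OF lower, of m] m by simp
  moreover have "v mod m < m" using m by simp
  ultimately have "2*(v mod m) \<le> v div m" by linarith
  then show ?thesis
    using True by (intro exI[of _ "v div m"] exI[of _ "v mod m"]) simp
next
  case False
  then have "(2*K + 1) * m \<le> v div m * m" by (intro mult_le_mono1) simp
  also have "\<dots> \<le> v" by (rule div_times_less_eq_dividend)
  finally have "m*(2*K) \<le> v" by (simp add: algebra_simps)
  moreover have "v - m*(2*K) \<le> K" using upper by (simp add: algebra_simps)
  ultimately show ?thesis
    by (intro exI[of _ "2*K"] exI[of _ "v - m*(2*K)"]) auto
qed

lemma sum_of_generators_Suc_reduce:
  assumes m: "m \<ge> 1" and s: "sum_of_generators m (Suc K) s"
    and bound: "s \<le> K*(2*m*m + 2*m + 1)"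
  shows "sum_of_generators m K s"
proof -
  obtain u y where "2*y \<le> u" "u \<le> 2*Suc K" and s_eq: "s = Suc K*(2*m*m) + m*u + y"
    using s unfolding sum_of_generators_iff by blast
  define v where "v = s - K*(2*m*m)"
  have s_v: "s = K*(2*m*m) + v" using s_eq unfolding v_def by simp
  have "m*(2*m) \<le> v" using s_eq unfolding v_def by (simp add: algebra_simps)
  moreover have "v \<le> K*(2*m + 1)" using bound unfolding v_def by (simp add: algebra_simps)
  ultimately obtain u' y' where "2*y' \<le> u'" "u' \<le> 2*K" "v = m*u' + y'"
    using excess_decomposition[OF m] by blast
  then show ?thesis
    unfolding sum_of_generators_iff using s_v by auto
qed

lemma sum_of_generators_at_most:
  assumes m: "m \<ge> 1" and s: "sum_of_generators m N s"
    and bound: "s \<le> t*(2*m*m + 2*m + 1)"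
  shows "\<exists>N' \<le> t. sum_of_generators m N' s"
  using s
proof (induction N)
  case 0
  then show ?case by auto
next
  case (Suc N)
  show ?case
  proof (cases "Suc N \<le> t")
    case True
    then show ?thesis using Suc.prems by blast
  next
    case False
    then have "s \<le> N*(2*m*m + 2*m + 1)"
      using bound mult_le_mono1 order_trans by (metis not_less_eq_eq)
    then show ?thesis
      using Suc sum_of_generators_Suc_reduce[OF m] by blast
  qed
qed

theorem lemma4p6:
  fixes n t s :: nat
  assumes "n \<ge> 2"
    and "t \<ge> 2 * suz_q0 n + 1"
    and "s \<in> suz_H n"
    and "s \<le> t * (suz_q n + 2 * suz_q0 n + 1)"
  shows "\<exists>a b c d :: nat.
      a * suz_q n + b * (suz_q n + suz_q0 n) + c * (suz_q n + 2 * suz_q0 n)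
      + d * (suz_q n + 2 * suz_q0 n + 1) = s \<and> a + b + c + d \<le> t"
proof -
  define m where "m = suz_q0 n"
  have m: "m \<ge> 1" unfolding m_def suz_q0_def by simp
  have q: "suz_q n = 2*m*m" unfolding m_def suz_q_def by (simp add: power2_eq_square)
  have "\<exists>N. sum_of_generators m N s"
    using assms(3) unfolding suz_H_def sum_of_generators_def q m_def[symmetric] by blast
  then obtain N where "N \<le> t" "sum_of_generators m N s"
    using sum_of_generators_at_most[OF m] assms(4) unfolding q m_def[symmetric] by blast
  then show ?thesis
    unfolding sum_of_generators_def q m_def[symmetric] by fastforce
qed

end
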